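(* Let $q(\mathbf{y},\mathbf{x})$ be a joint distribution of a label $\mathbf{y}$ and inputs $\mathbf{x}\in\mathbb{R}^d$, and $e:\mathbb{R}^d\to\{0,1\}^d$ an explanation. Then $e$ is encoding if and only if there exist a selection $\mathbf{v}$ with $q(e(\mathbf{x})=\mathbf{v})>0$ and a set $\mathbf{S}_{\mathbf{v}}\subseteq\{\mathbf{x}_{\mathbf{v}}: e(\mathbf{x})=\mathbf{v}\}$ with $q(\mathbf{x}_{\mathbf{v}}\in\mathbf{S}_{\mathbf{v}})>0$ such that for all $\mathbf{a}\in\mathbf{S}_{\mathbf{v}}$, $\mathbf{y}$ is not conditionally independent of $\mathbf{E}_{\mathbf{v}}$ given $\mathbf{x}_{\mathbf{v}}=\mathbf{a}$.
   Context: For $\mathbf{v}\in\{0,1\}^d$, $\mathbf{x}_{\mathbf{v}}$ denotes the values of the coordinates selected by $\mathbf{v}$; the explanation is the random pair $\mathbf{x}_{e(\mathbf{x})}=(e(\mathbf{x}),\mathbf{x}_{e(\mathbf{x})})$, written $(\mathbf{v},\mathbf{a})$; $\mathbf{E}_{\mathbf{v}}=\mathbb{1}[e(\mathbf{x})=\mathbf{v}]$. Regular conditional distributions are assumed to exist. $e$ is encoding if there is a set $\mathbf{S}$ of pairs with $q(\mathbf{x}_{e(\mathbf{x})}\in\mathbf{S})>0$ such that for every $(\mathbf{v},\mathbf{a})\in\mathbf{S}$, $\mathbf{y}$ is not conditionally independent of $\mathbf{E}_{\mathbf{v}}$ given $\mathbf{x}_{\mathbf{v}}=\mathbf{a}$.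 *)

theory Defs
  imports "HOL-Probability.Probability"
begin

text \<open>Inputs live in real^'d (d = CARD('d)); a selection v in {0,1}^d is represented
  by the set of selected coordinates (a 'd set). The selected values x_v are represented
  by the zero-padded vector: selected coordinates kept, others set to 0 (for fixed v this
  is an injective, measurable re-encoding of the tuple of selected values).\<close>

definition sel :: "'d set \<Rightarrow> real^'d::finite \<Rightarrow> real^'d" where
  "sel v x = (\<chi> i. if i \<in> v then x $ i else 0)"

text \<open>A (version of the) regular conditional distribution of the pair (y, E_v), with
  E_v = [e(x) = v], given x_v: a probability kernel K from the x_v-space to
  label space times bool, such that integrating it against the law of x_v
  reproduces the joint law of (y, E_v, x_v).\<close>

definition is_rcd ::
  "('b \<times> (real^'d::finite)) measure \<Rightarrow> 'b measure \<Rightarrow> (real^'d \<Rightarrow> 'd set) \<Rightarrow> 'd set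
     \<Rightarrow> (real^'d \<Rightarrow> ('b \<times> bool) measure) \<Rightarrow> bool" where
  "is_rcd q N e v K \<longleftrightarrow>
     K \<in> borel \<rightarrow>\<^sub>M prob_algebra (N \<Otimes>\<^sub>M count_space UNIV) \<and>
     (\<forall>A \<in> sets (N \<Otimes>\<^sub>M count_space UNIV). \<forall>B \<in> sets borel.
        emeasure q {p \<in> space q. (fst p, e (snd p) = v) \<in> A \<and> sel v (snd p) \<in> B}
        = (\<integral>\<^sup>+ a. indicator B a * emeasure (K a) A \<partial>(distr q borel (\<lambda>p. sel v (snd p)))))"

text \<open>y is conditionally independent of E_v given x_v = a, where mu = K a is the
  conditional distribution of (y, E_v) given x_v = a: mu is the product of its marginals.\<close>

definition cond_indep_given :: "'b measure \<Rightarrow> ('b \<times> bool) measure \<Rightarrow> bool" where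
  "cond_indep_given N \<mu> \<longleftrightarrow>
     (\<forall>A \<in> sets N. \<forall>b::bool.
        measure \<mu> (A \<times> {b}) = measure \<mu> (A \<times> UNIV) * measure \<mu> (space N \<times> {b}))"

text \<open>e is encoding (w.r.t. the chosen versions K v of the conditional distributions).\<close>

definition encoding ::
  "('b \<times> (real^'d::finite)) measure \<Rightarrow> 'b measure \<Rightarrow> (real^'d \<Rightarrow> 'd set)
     \<Rightarrow> ('d set \<Rightarrow> real^'d \<Rightarrow> ('b \<times> bool) measure) \<Rightarrow> bool" where
  "encoding q N e K \<longleftrightarrow>
     (\<exists>S \<in> sets (count_space UNIV \<Otimes>\<^sub>M borel).
        measure q {p \<in> space q. (e (snd p), sel (e (snd p)) (snd p)) \<in> S} > 0 \<and>
        (\<forall>(v, a) \<in> S. \<not> cond_indep_given N (K v a)))"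

end

theory Submission
  imports Defs
begin

(* If e is encoding, the event of positive mass splits along the finitely many selections,
   so a single selection v already carries positive mass. The set of selected values reached
   from it is the image of a Borel set under x |-> x_v and need not be Borel; inner regularity
   provides a compact subset of positive mass, whose image is compact.
   Conversely, if the event {e(x) = v, x_v in S_v} were null, the regular conditional
   distribution would give q(E_v = 1 | x_v = a) = 0 for almost every a in S_v. A degenerate
   E_v is independent of y, so the dependence assumed on S_v forces q(x_v in S_v) = 0. *)

lemma linear_sel: "linear (sel v)"
  by (auto simp: linear_iff sel_def vec_eq_iff)

lemma continuous_on_sel: "continuous_on A (sel v)"
  using linear_sel linear_continuous_on linear_conv_bounded_linear by blast

lemma borel_measurable_sel[measurable]: "sel v \<in> borel_measurable borel"
  by (intro borel_measurable_continuous_onI continuous_on_sel)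

lemma cond_indep_given_if_degenerate:
  fixes \<mu> :: "('b \<times> bool) measure"
  assumes "prob_space \<mu>" and sets_\<mu>: "sets \<mu> = sets (N \<Otimes>\<^sub>M count_space UNIV)"
    and null: "emeasure \<mu> (space N \<times> {b}) = 0"
  shows "cond_indep_given N \<mu>"
  unfolding cond_indep_given_def
proof (intro ballI allI)
  interpret prob_space \<mu> by fact
  fix A c assume A: "A \<in> sets N"
  have rect_sets: "X \<times> Y \<in> sets \<mu>" if "X \<in> sets N" for X Y
    by (simp add: sets_\<mu> pair_measureI that)
  have split: "measure \<mu> (X \<times> UNIV) = measure \<mu> (X \<times> {b}) + measure \<mu> (X \<times> {\<not> b})"
    if "X \<in> sets N" for X
  proof -
    have "X \<times> UNIV = X \<times> {b} \<union> X \<times> {\<not> b}" by auto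
    then show ?thesis
      using that by (simp add: finite_measure_Union rect_sets disjoint_iff)
  qed
  have space_null: "measure \<mu> (space N \<times> {b}) = 0"
    using null by (simp add: measure_def)
  have A_null: "measure \<mu> (A \<times> {b}) = 0"
    using finite_measure_mono[of "A \<times> {b}" "space N \<times> {b}"] sets.sets_into_space[OF A]
      space_null rect_sets[OF sets.top] by (auto simp: measure_le_0_iff)
  have "space \<mu> = space N \<times> UNIV"
    using sets_eq_imp_space_eq[OF sets_\<mu>] by (simp add: space_pair_measure)
  then have "measure \<mu> (space N \<times> {\<not> b}) = 1"
    using split[OF sets.top] space_null prob_space by simp
  then show "measure \<mu> (A \<times> {c}) = measure \<mu> (A \<times> UNIV) * measure \<mu> (space N \<times> {c})"
    using split[OF A] A_null space_null by (cases "c = b") (auto simp: eq_commute[of c])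
qed

lemma compact_subset_positive_emeasure:
  fixes M :: "'a::{second_countable_topology, complete_space} measure"
  assumes "sets M = sets borel" "emeasure M (space M) \<noteq> \<infinity>"
    and "B \<in> sets borel" "0 < emeasure M B"
  obtains C where "compact C" "C \<subseteq> B" "0 < emeasure M C"
  using assms inner_regular[OF assms(1-3)] by (auto simp: less_SUP_iff)

locale explanation_model = prob_space q
  for q :: "('b \<times> (real^'d::finite)) measure" and N :: "'b measure"
    and e :: "real^'d \<Rightarrow> 'd set" +
  assumes sets_q: "sets q = sets (N \<Otimes>\<^sub>M borel)"
    and measurable_e[measurable]: "e \<in> borel \<rightarrow>\<^sub>M count_space UNIV"
begin

lemma space_q: "space q = space N \<times> UNIV"
  using sets_eq_imp_space_eq[OF sets_q] by (simp add: space_pair_measure)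

lemma measurable_input[measurable]: "snd \<in> q \<rightarrow>\<^sub>M borel"
  by (subst measurable_cong_sets[OF sets_q refl]) simp

lemma emeasure_input_event:
  assumes "B \<in> sets borel"
  shows "emeasure (distr q borel snd) B = emeasure q {p \<in> space q. snd p \<in> B}"
  using assms by (simp add: emeasure_distr vimage_def Int_def conj_commute)

lemma selection_with_positive_mass:
  assumes S[measurable]: "S \<in> sets (count_space UNIV \<Otimes>\<^sub>M borel)"
    and S_pos: "0 < measure q {p \<in> space q. (e (snd p), sel (e (snd p)) (snd p)) \<in> S}"
  obtains v where "0 < emeasure (distr q borel snd) {x. e x = v \<and> (v, sel v x) \<in> S}"
proof -
  define D where "D v = {x. e x = v \<and> (v, sel v x) \<in> S}" for v
  have D_borel: "D v \<in> sets borel" for v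
    unfolding D_def by measurable
  have "{p \<in> space q. (e (snd p), sel (e (snd p)) (snd p)) \<in> S} = (\<Union>v. {p \<in> space q. snd p \<in> D v})"
    by (auto simp: D_def)
  with S_pos obtain v where "{p \<in> space q. snd p \<in> D v} \<notin> null_sets q"
    using null_sets_UN[of "\<lambda>v. {p \<in> space q. snd p \<in> D v}" q] by (force simp: measure_def)
  then show thesis
    using that D_borel by (simp add: D_def emeasure_input_event null_sets_def zero_less_iff_neq_zero)
qed

lemma encoding_imp_positive_selection:
  assumes "encoding q N e K"
  obtains v T where "0 < measure q {p \<in> space q. e (snd p) = v}"
    and "T \<in> sets borel" and "T \<subseteq> {sel v x | x. e x = v}"
    and "0 < measure q {p \<in> space q. sel v (snd p) \<in> T}"
    and "\<forall>a \<in> T. \<not> cond_indep_given N (K v a)"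
proof -
  obtain S where S[measurable]: "S \<in> sets (count_space UNIV \<Otimes>\<^sub>M borel)"
    and S_pos: "0 < measure q {p \<in> space q. (e (snd p), sel (e (snd p)) (snd p)) \<in> S}"
    and S_dep: "\<forall>(v, a) \<in> S. \<not> cond_indep_given N (K v a)"
    using assms unfolding encoding_def by blast
  from S S_pos obtain v
    where D_pos: "0 < emeasure (distr q borel snd) {x. e x = v \<and> (v, sel v x) \<in> S}"
    by (rule selection_with_positive_mass)
  define D where "D = {x. e x = v \<and> (v, sel v x) \<in> S}"
  have "D \<in> sets borel"
    unfolding D_def by measurable
  then obtain C where C: "compact C" "C \<subseteq> D" and C_pos: "0 < emeasure (distr q borel snd) C"
    using compact_subset_positive_emeasure[of "distr q borel snd" D] D_pos
      prob_space.emeasure_space_1[OF prob_space_distr[OF measurable_input]] by (auto simp: D_def)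
  have C_borel: "C \<in> sets borel"
    using C by (simp add: compact_imp_closed borel_closed)
  define T where "T = sel v ` C"
  have T_compact: "compact T"
    unfolding T_def using C by (intro compact_continuous_image continuous_on_sel)
  have C_event: "0 < measure q {p \<in> space q. snd p \<in> C}"
    using C_pos C_borel by (simp add: emeasure_input_event emeasure_eq_measure)
  have T_borel: "T \<in> sets borel"
    using T_compact by (simp add: compact_imp_closed borel_closed)
  show thesis
  proof (rule that)
    have "measure q {p \<in> space q. snd p \<in> C} \<le> measure q {p \<in> space q. e (snd p) = v}"
      using C(2) by (intro finite_measure_mono) (auto simp: D_def, measurable)
    with C_event show "0 < measure q {p \<in> space q. e (snd p) = v}"
      by linarith
    show "T \<in> sets borel" by (fact T_borel)
    show "T \<subseteq> {sel v x | x. e x = v}"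
      using C(2) by (auto simp: T_def D_def)
    have "measure q {p \<in> space q. snd p \<in> C} \<le> measure q {p \<in> space q. sel v (snd p) \<in> T}"
      using T_borel by (intro finite_measure_mono) (auto simp: T_def, measurable)
    with C_event show "0 < measure q {p \<in> space q. sel v (snd p) \<in> T}"
      by linarith
    show "\<forall>a \<in> T. \<not> cond_indep_given N (K v a)"
      using C S_dep by (auto simp: T_def D_def)
  qed
qed

lemma emeasure_selected_event:
  assumes "is_rcd q N e v Kv" and "B \<in> sets borel"
  shows "emeasure q {p \<in> space q. e (snd p) = v \<and> sel v (snd p) \<in> B} =
    (\<integral>\<^sup>+ a. indicator B a * emeasure (Kv a) (space N \<times> {True})
      \<partial>distr q borel (\<lambda>p. sel v (snd p)))"
proof -
  have "emeasure q {p \<in> space q. e (snd p) = v \<and> sel v (snd p) \<in> B} =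
      emeasure q {p \<in> space q. (fst p, e (snd p) = v) \<in> space N \<times> {True} \<and> sel v (snd p) \<in> B}"
    using space_q by (auto intro!: arg_cong[where f = "emeasure q"])
  also have "\<dots> = (\<integral>\<^sup>+ a. indicator B a * emeasure (Kv a) (space N \<times> {True})
      \<partial>distr q borel (\<lambda>p. sel v (snd p)))"
  proof -
    have "space N \<times> {True} \<in> sets (N \<Otimes>\<^sub>M count_space UNIV)"
      by (intro pair_measureI) auto
    then show ?thesis
      using assms unfolding is_rcd_def by (elim conjE) (drule (1) bspec, drule (1) bspec)
  qed
  finally show ?thesis .
qed

lemma selected_event_positive:
  assumes rcd: "is_rcd q N e v Kv" and B[measurable]: "B \<in> sets borel"
    and pos: "0 < measure q {p \<in> space q. sel v (snd p) \<in> B}"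
    and dep: "\<forall>a \<in> B. \<not> cond_indep_given N (Kv a)"
  shows "0 < emeasure q {p \<in> space q. e (snd p) = v \<and> sel v (snd p) \<in> B}"
proof (rule ccontr)
  define L where "L = distr q borel (\<lambda>p. sel v (snd p))"
  define E where "E = space N \<times> {True}"
  assume "\<not> ?thesis"
  then have integral_0: "(\<integral>\<^sup>+ a. indicator B a * emeasure (Kv a) E \<partial>L) = 0"
    using emeasure_selected_event[OF rcd B] by (simp add: L_def E_def)
  have Kv: "Kv \<in> borel \<rightarrow>\<^sub>M prob_algebra (N \<Otimes>\<^sub>M count_space UNIV)"
    using rcd unfolding is_rcd_def by blast
  have E_sets: "E \<in> sets (N \<Otimes>\<^sub>M count_space UNIV)"
    unfolding E_def by (intro pair_measureI) auto
  have [measurable]: "(\<lambda>a. emeasure (Kv a) E) \<in> borel_measurable borel"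
    using measurable_compose[OF measurable_prob_algebraD[OF Kv]
        measurable_emeasure_subprob_algebra[OF E_sets]]
    by (simp add: comp_def)
  have "AE a in L. indicator B a * emeasure (Kv a) E = 0"
    using integral_0 by (subst (asm) nn_integral_0_iff_AE) (simp_all add: L_def)
  moreover have "emeasure (Kv a) E \<noteq> 0" if "a \<in> B" for a
    using cond_indep_given_if_degenerate[of "Kv a" N True] dep that measurable_space[OF Kv, of a]
    by (auto simp: space_prob_algebra E_def)
  ultimately have "AE a in L. a \<notin> B"
    by (auto elim!: AE_mp)
  then have "emeasure L B = 0"
    using AE_iff_measurable[of B L "\<lambda>a. a \<notin> B"] by (simp add: L_def)
  moreover have "emeasure L B = emeasure q {p \<in> space q. sel v (snd p) \<in> B}"
    by (simp add: L_def emeasure_distr vimage_def Int_def conj_commute)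
  ultimately show False
    using pos by (simp add: emeasure_eq_measure)
qed

lemma positive_selection_imp_encoding:
  assumes "is_rcd q N e v (K v)" and "T \<in> sets borel"
    and "0 < measure q {p \<in> space q. sel v (snd p) \<in> T}"
    and "\<forall>a \<in> T. \<not> cond_indep_given N (K v a)"
  shows "encoding q N e K"
  unfolding encoding_def
proof (intro bexI conjI)
  show "{v} \<times> T \<in> sets (count_space UNIV \<Otimes>\<^sub>M borel)"
    using assms(2) by (intro pair_measureI) auto
  have "{p \<in> space q. (e (snd p), sel (e (snd p)) (snd p)) \<in> {v} \<times> T}
      = {p \<in> space q. e (snd p) = v \<and> sel v (snd p) \<in> T}"
    by auto
  then show "0 < measure q {p \<in> space q. (e (snd p), sel (e (snd p)) (snd p)) \<in> {v} \<times> T}"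
    using selected_event_positive[OF assms] by (simp add: emeasure_eq_measure)
  show "\<forall>(w, a) \<in> {v} \<times> T. \<not> cond_indep_given N (K w a)"
    using assms(4) by auto
qed

end

theorem lemma2:
  fixes q :: "('b \<times> (real^'d::finite)) measure"
    and N :: "'b measure"
    and e :: "real^'d \<Rightarrow> 'd set"
    and K :: "'d set \<Rightarrow> real^'d \<Rightarrow> ('b \<times> bool) measure"
  assumes "prob_space q"
    and "sets q = sets (N \<Otimes>\<^sub>M borel)"
    and "e \<in> borel \<rightarrow>\<^sub>M count_space UNIV"
    and "\<And>v. is_rcd q N e v (K v)"
  shows "encoding q N e K \<longleftrightarrow>
    (\<exists>v. measure q {p \<in> space q. e (snd p) = v} > 0 \<and>
      (\<exists>Sv \<in> sets borel. Sv \<subseteq> {sel v x | x. e x = v} \<and>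
         measure q {p \<in> space q. sel v (snd p) \<in> Sv} > 0 \<and>
         (\<forall>a \<in> Sv. \<not> cond_indep_given N (K v a))))"
proof -
  interpret explanation_model q N e
    using assms(1-3) by (simp add: explanation_model_def explanation_model_axioms_def)
  show ?thesis
    by (rule iffI)
      (erule encoding_imp_positive_selection, blast,
       use positive_selection_imp_encoding assms(4) in blast)
qed

end
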